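(* Let $q$ be a prime power, $m>4$, $V=\mathbb F_q^m$, and $\mu=m-1$. Every $(\mu+1)$-dimensional subspace of $\bigwedge^2V$ contains at most $(q^{\mu}-1)+q^2(q-1)$ decomposable vectors.
   Context: A nonzero $\omega\in\bigwedge^2V$ is decomposable if $\omega=u\wedge v$ for some $u,v\in V$. *)

theory Defs
  imports "HOL-Analysis.Analysis"
begin

text \<open>Model of the exterior square: for V = F^'m, the space \<and>^2 V is identified with
  the space of alternating m x m matrices (indexed by 'm \<times> 'm), with
  u \<and> v represented by the matrix (u_i v_j - u_j v_i).\<close>

definition wedge :: "'a::field ^ 'm::finite \<Rightarrow> 'a ^ 'm \<Rightarrow> 'a ^ ('m::finite \<times> 'm)" where
  "wedge u v = (\<chi> ij. u $ fst ij * v $ snd ij - u $ snd ij * v $ fst ij)"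

definition ext2 :: "('a::field ^ ('m::finite \<times> 'm)) set" where
  "ext2 = vec.span (range (\<lambda>(u, v). wedge (u :: 'a ^ 'm) v))"

definition decomposable :: "'a::field ^ ('m::finite \<times> 'm) \<Rightarrow> bool" where
  "decomposable w \<longleftrightarrow> w \<noteq> 0 \<and> (\<exists>u v :: 'a ^ 'm. w = wedge u v)"

end

theory Submission
  imports Defs
begin

text \<open>Choose p \<noteq> 0 for which Z = W \<inter> (p \<and> V) has maximal dimension d and count the
  decomposable vectors of W coset by coset of Z: Z contributes q^d - 1, and there are
  q^(\<mu>+1-d) - 1 further cosets. If a \<and> b lies in W but not in Z, then p \<notin> \<langle>a, b\<rangle>, and since
  a \<and> b + p \<and> x has rank four unless x \<in> \<langle>p, a, b\<rangle>, the decomposable vectors of its coset are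
  among the a \<and> b + p \<and> x with x \<in> \<langle>a, b\<rangle> and p \<and> x \<in> W, at most q^2 of them. This settles
  d \<ge> 3 by convexity of d \<mapsto> q^d + q^(\<mu>+3-d). For d = 1 maximality of d leaves at most one
  decomposable vector per coset, and for d = 2 only the at most q - 1 cosets of the nonzero
  multiples of a single a \<and> b can contain more than q of them.\<close>

lemma wedge_add_left: "wedge (u + u') v = wedge u v + wedge u' v"
  and wedge_add_right: "wedge u (v + v') = wedge u v + wedge u v'"
  and wedge_scale_left: "wedge (c *s u) v = c *s wedge u v"
  and wedge_scale_right: "wedge u (c *s v) = c *s wedge u v"
  and wedge_commute: "wedge v u = - wedge u v"
  and wedge_self [simp]: "wedge u u = 0"
  and wedge_zero_left [simp]: "wedge 0 v = 0"
  and wedge_zero_right [simp]: "wedge u 0 = 0"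
  by (simp_all add: wedge_def vec_eq_iff algebra_simps)

lemma linear_wedge: "Vector_Spaces.linear (*s) (*s) (wedge u)"
  by unfold_locales (simp_all add: wedge_add_right wedge_scale_right)

definition dot :: "'a::field ^ 'm::finite \<Rightarrow> 'a ^ 'm \<Rightarrow> 'a" where
  "dot y v = (\<Sum>i\<in>UNIV. y $ i * v $ i)"

definition contract :: "'a::field ^ 'm::finite \<Rightarrow> 'a ^ ('m \<times> 'm) \<Rightarrow> 'a ^ 'm" where
  "contract y w = (\<chi> j. \<Sum>i\<in>UNIV. y $ i * w $ (i, j))"

lemma contract_add: "contract y (w + w') = contract y w + contract y w'"
  by (simp add: contract_def vec_eq_iff algebra_simps sum.distrib)

lemma contract_wedge: "contract y (wedge u v) = dot y u *s v - dot y v *s u"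
proof -
  have "(\<Sum>i\<in>UNIV. y$i * (u$i * v$j - u$j * v$i)) = (\<Sum>i\<in>UNIV. y$i * u$i) * v$j - (\<Sum>i\<in>UNIV. y$i * v$i) * u$j"
    for j
  proof -
    have "(\<Sum>i\<in>UNIV. y$i * (u$i * v$j - u$j * v$i)) = (\<Sum>i\<in>UNIV. y$i * u$i * v$j - y$i * v$i * u$j)"
      by (rule sum.cong) (auto simp: algebra_simps)
    then show ?thesis by (simp add: sum_subtractf sum_distrib_right)
  qed
  then show ?thesis by (simp add: contract_def wedge_def dot_def vec_eq_iff mult.commute)
qed

lemma independent_dual_vector:
  fixes B :: "('a::field ^ 'm::finite) set"
  assumes "vec.independent B" "b \<in> B"
  shows "\<exists>y. dot y b = 1 \<and> (\<forall>b'\<in>B - {b}. dot y b' = 0)"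
proof -
  fix k :: 'm
  obtain g where g: "Vector_Spaces.linear (*s) (*s) g" "\<forall>x\<in>B. g x = (if x = b then axis k 1 else 0)"
    using vec.linear_independent_extend[OF assms(1), of "\<lambda>x. if x = b then axis k 1 else 0"] by blast
  have "dot (matrix g $ k) v = g v $ k" for v
    using arg_cong[OF matrix_works[OF g(1), of v], of "\<lambda>x. x $ k"]
    by (simp add: dot_def matrix_vector_mult_def)
  then show ?thesis
    using g(2) assms(2) by (intro exI[of _ "matrix g $ k"]) auto
qed

lemma wedge_eq_0_iff:
  fixes p x :: "'a::field ^ 'm::finite"
  assumes "p \<noteq> 0"
  shows "wedge p x = 0 \<longleftrightarrow> x \<in> vec.span {p}"
proof
  assume px: "wedge p x = 0"
  show "x \<in> vec.span {p}"
  proof (rule ccontr)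
    assume x: "x \<notin> vec.span {p}"
    then have "vec.independent {x, p}" "x \<noteq> p"
      using assms vec.span_base[of p "{p}"] by (auto simp: vec.independent_insert)
    then obtain y where "dot y p = 1" "dot y x = 0"
      using independent_dual_vector[of "{x, p}" p] by auto
    then have "contract y (wedge p x) = x" by (simp add: contract_wedge)
    with px have "x = 0" by (simp add: contract_def vec_eq_iff)
    with x show False by (simp add: vec.span_zero)
  qed
next
  assume "x \<in> vec.span {p}"
  then show "wedge p x = 0" by (auto simp: vec.span_singleton wedge_scale_right)
qed

lemma wedge_nonzero_imp_independent:
  assumes "wedge a b \<noteq> (0 :: 'a::field ^ ('m::finite \<times> 'm))"
  shows "vec.independent {a, b}" "a \<noteq> b"
proof -
  have "a \<noteq> 0" using assms by auto
  moreover from this have "b \<notin> vec.span {a}" using assms wedge_eq_0_iff[of a b] by blast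
  ultimately have "vec.independent (insert b {a})" "b \<noteq> a"
    using vec.span_base[of a "{a}"] by (auto simp: vec.independent_insert)
  then show "vec.independent {a, b}" "a \<noteq> b" by (simp_all add: insert_commute)
qed

text \<open>Contracting u \<and> v with covectors dual to a, b, c, e places all four vectors in the plane
  spanned by u and v.\<close>

lemma wedge_add_wedge_neq_wedge:
  fixes a b c e u v :: "'a::field ^ 'm::finite"
  assumes ind: "vec.independent {a, b, c, e}" and dist: "distinct [a, b, c, e]"
  shows "wedge a b + wedge c e \<noteq> wedge u v"
proof
  assume eq: "wedge a b + wedge c e = wedge u v"
  have in_plane: "dot y a *s b - dot y b *s a + (dot y c *s e - dot y e *s c) \<in> vec.span {u, v}" for y
  proof -
    have "dot y a *s b - dot y b *s a + (dot y c *s e - dot y e *s c) = contract y (wedge u v)"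
      by (simp add: eq[symmetric] contract_add contract_wedge)
    also have "\<dots> \<in> vec.span {u, v}"
      by (simp add: contract_wedge vec.span_diff vec.span_scale vec.span_base)
    finally show ?thesis .
  qed
  obtain ya where "dot ya a = 1" "dot ya b = 0" "dot ya c = 0" "dot ya e = 0"
    using independent_dual_vector[OF ind, of a] dist by auto
  with in_plane[of ya] have "b \<in> vec.span {u, v}" by simp
  moreover obtain yb where "dot yb a = 0" "dot yb b = 1" "dot yb c = 0" "dot yb e = 0"
    using independent_dual_vector[OF ind, of b] dist by auto
  with in_plane[of yb] have "a \<in> vec.span {u, v}" using vec.span_neg[of "- a"] by simp
  moreover obtain yc where "dot yc a = 0" "dot yc b = 0" "dot yc c = 1" "dot yc e = 0"
    using independent_dual_vector[OF ind, of c] dist by auto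
  with in_plane[of yc] have "e \<in> vec.span {u, v}" by simp
  moreover obtain ye where "dot ye a = 0" "dot ye b = 0" "dot ye c = 0" "dot ye e = 1"
    using independent_dual_vector[OF ind, of e] dist by auto
  with in_plane[of ye] have "c \<in> vec.span {u, v}" using vec.span_neg[of "- c"] by simp
  ultimately have "{a, b, c, e} \<subseteq> vec.span {u, v}" by simp
  from vec.independent_span_bound[OF _ ind this] have "card {a, b, c, e} \<le> card {u, v}" by simp
  moreover have "card {u, v} \<le> 2" by (simp add: card_insert_le_m1)
  ultimately show False using dist by simp
qed

lemma card_span_independent:
  fixes B :: "('a::{finite, field} ^ 'm::finite) set"
  assumes "vec.independent B"
  shows "card (vec.span B) = CARD('a) ^ card B"
proof -
  have "finite B" by simp
  then show ?thesis using assms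
  proof (induction B rule: finite_induct)
    case empty
    then show ?case by simp
  next
    case (insert b B)
    have indB: "vec.independent B" and b: "b \<notin> vec.span B"
      using insert.prems insert.hyps by (auto simp: vec.independent_insert)
    let ?f = "\<lambda>(c, v). c *s b + v"
    have "vec.span (insert b B) = ?f ` (UNIV \<times> vec.span B)"
    proof (intro equalityI subsetI)
      fix x assume "x \<in> vec.span (insert b B)"
      then obtain c where "x - c *s b \<in> vec.span B" by (auto simp: vec.span_insert)
      then show "x \<in> ?f ` (UNIV \<times> vec.span B)" by (intro image_eqI[of _ _ "(c, x - c *s b)"]) auto
    next
      fix x assume "x \<in> ?f ` (UNIV \<times> vec.span B)"
      then obtain c v where "x = c *s b + v" "v \<in> vec.span B" by auto
      then show "x \<in> vec.span (insert b B)" unfolding vec.span_insert by (auto intro!: exI[of _ c])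
    qed
    moreover have "inj_on ?f (UNIV \<times> vec.span B)"
    proof (rule inj_onI, clarsimp)
      fix c v c' v' assume v: "v \<in> vec.span B" "v' \<in> vec.span B" and eq: "c *s b + v = c' *s b + v'"
      have "(c - c') *s b = v' - v"
        using eq by (simp add: algebra_simps vector_sadd_rdistrib vector_ssub_ldistrib)
      then have "(c - c') *s b \<in> vec.span B" using vec.span_diff[OF v(2) v(1)] by simp
      have "c = c'"
      proof (rule ccontr)
        assume "c \<noteq> c'"
        then have "b = inverse (c - c') *s ((c - c') *s b)" by (simp only: vector_smult_assoc) simp
        then show False using b vec.span_scale[OF \<open>(c - c') *s b \<in> vec.span B\<close>] by metis
      qed
      with eq show "c = c' \<and> v = v'" by simp
    qed
    ultimately have "card (vec.span (insert b B)) = CARD('a) * card (vec.span B)"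
      by (simp add: card_image card_cartesian_product)
    with insert.IH[OF indB] insert.hyps show ?case by simp
  qed
qed

lemma card_subspace:
  fixes U :: "('a::{finite, field} ^ 'm::finite) set"
  assumes "vec.subspace U"
  shows "card U = CARD('a) ^ vec.dim U"
proof -
  obtain B where "B \<subseteq> U" "vec.independent B" "U \<subseteq> vec.span B" "card B = vec.dim U"
    using vec.basis_exists by blast
  moreover from this have "vec.span B = U" using assms vec.span_minimal by blast
  ultimately show ?thesis using card_span_independent by metis
qed

lemma card_span_pair_le: "card (vec.span {a, b :: 'a::{finite, field} ^ 'm::finite}) \<le> CARD('a) ^ 2"
proof -
  have "card {a, b} \<le> 2" by (simp add: card_insert_if)
  then have "vec.dim (vec.span {a, b}) \<le> 2"
    using vec.dim_le_card[of "vec.span {a, b}" "{a, b}"] by simp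
  then show ?thesis by (simp add: card_subspace power_increasing)
qed

lemma wedge_mem_span_wedges:
  fixes a b :: "'a::field ^ 'm::finite"
  assumes "a \<in> vec.span S" "b \<in> vec.span S"
  shows "wedge a b \<in> vec.span {wedge s t | s t. s \<in> S \<and> t \<in> S}"
proof -
  let ?T = "{wedge s t | s t. s \<in> S \<and> t \<in> S}"
  have "wedge s a \<in> vec.span ?T" if "s \<in> S" for s
  proof -
    have "wedge s a \<in> vec.span (wedge s ` S)"
      using assms(1) vec.linear_span_image[OF linear_wedge] by blast
    also have "\<dots> \<subseteq> vec.span ?T" by (rule vec.span_mono) (use that in blast)
    finally show ?thesis .
  qed
  then have "wedge a s \<in> vec.span ?T" if "s \<in> S" for s
    using vec.span_neg[of "wedge s a"] that by (simp add: wedge_commute[of a s])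
  then have "vec.span (wedge a ` S) \<subseteq> vec.span ?T" by (intro vec.span_minimal) auto
  then show ?thesis using assms(2) vec.linear_span_image[OF linear_wedge] by blast
qed

lemma wedge_eq_wedge_of_mem_span:
  fixes x a b :: "'a::field ^ 'm::finite"
  assumes "x \<in> vec.span {a, b}" "x \<noteq> 0"
  obtains y where "wedge a b = wedge x y"
proof -
  obtain k l where x: "x = k *s a + l *s b"
    using assms(1) by (auto simp: vec.span_insert vec.span_singleton algebra_simps)
  show ?thesis
  proof (cases "k = 0")
    case False
    then have "wedge a b = wedge x (inverse k *s b)"
      by (simp add: x wedge_add_left wedge_scale_left wedge_scale_right vector_smult_assoc)
    then show ?thesis by (rule that)
  next
    case True
    with assms(2) x have "l \<noteq> 0" by auto
    with True have "wedge a b = wedge x (- inverse l *s a)"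
      by (simp add: x wedge_def vec_eq_iff field_simps)
    then show ?thesis by (rule that)
  qed
qed

lemma dim_range_wedge_le:
  fixes p :: "'a::field ^ 'm::finite"
  assumes "p \<noteq> 0"
  shows "vec.dim (range (wedge p)) \<le> CARD('m) - 1"
proof -
  have ind: "vec.independent {p}" using assms by (simp add: vec.independent_insert)
  define B where "B = vec.extend_basis {p}"
  have pB: "p \<in> B" and fin: "finite B" and spanB: "vec.span B = UNIV"
    using vec.extend_basis_superset[OF ind] vec.independent_extend_basis[OF ind]
      vec.span_extend_basis[OF ind] by (auto simp: B_def vec.finiteI_independent)
  have "card B = vec.dim (UNIV :: ('a ^ 'm) set)"
    using vec.independent_extend_basis[OF ind] spanB by (intro vec.basis_card_eq_dim) (simp_all add: B_def)
  also have "\<dots> = CARD('m)" by (rule vec_dim_card)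
  finally have "card B = CARD('m)" .
  have "range (wedge p) = vec.span (wedge p ` B)"
    using vec.linear_span_image[OF linear_wedge] spanB by metis
  also have "wedge p ` B = insert 0 (wedge p ` (B - {p}))" using pB by force
  finally have "range (wedge p) \<subseteq> vec.span (wedge p ` (B - {p}))" by simp
  then have "vec.dim (range (wedge p)) \<le> card (wedge p ` (B - {p}))"
    using fin by (intro vec.dim_le_card) simp_all
  also have "\<dots> \<le> card (B - {p})" using fin by (simp add: card_image_le)
  finally show ?thesis using \<open>card B = CARD('m)\<close> pB by simp
qed

definition slice :: "('a::field ^ ('m::finite \<times> 'm)) set \<Rightarrow> 'a ^ 'm \<Rightarrow> ('a ^ ('m \<times> 'm)) set" where
  "slice W p = W \<inter> range (wedge p)"

lemma subspace_slice: "vec.subspace W \<Longrightarrow> vec.subspace (slice W p)"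
  unfolding slice_def
  by (intro vec.subspace_inter vec.linear_subspace_image[OF linear_wedge]) simp_all

lemma dim_slice_less:
  fixes p :: "'a::field ^ 'm::finite"
  assumes "p \<noteq> 0"
  shows "vec.dim (slice W p) < CARD('m)"
proof -
  have "vec.dim (slice W p) \<le> vec.dim (range (wedge p))" by (rule vec.dim_subset) (simp add: slice_def)
  moreover have "0 < CARD('m)" by simp
  ultimately show ?thesis using dim_range_wedge_le[OF assms] by linarith
qed

definition coset :: "('a::field ^ 'k::finite) set \<Rightarrow> 'a ^ 'k \<Rightarrow> ('a ^ 'k) set" where
  "coset Z w = (+) w ` Z"

context
  fixes Z :: "('a::field ^ 'k::finite) set"
  assumes subspace_Z: "vec.subspace Z"
begin

lemma mem_coset_self: "w \<in> coset Z w"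
  unfolding coset_def using vec.subspace_0[OF subspace_Z] by force

lemma coset_eq:
  assumes "y - w \<in> Z"
  shows "coset Z y = coset Z w"
proof -
  have "coset Z y \<subseteq> coset Z w" if "y - w \<in> Z" for y w
  proof
    fix x assume "x \<in> coset Z y"
    then obtain z where "z \<in> Z" "x = y + z" by (auto simp: coset_def)
    moreover from this have "(y - w) + z \<in> Z" using vec.subspace_add[OF subspace_Z that] by blast
    ultimately show "x \<in> coset Z w" unfolding coset_def by (auto intro!: image_eqI[of _ _ "(y - w) + z"])
  qed
  moreover have "w - y \<in> Z" using vec.subspace_neg[OF subspace_Z assms] by (metis minus_diff_eq)
  ultimately show ?thesis using assms by blast
qed

lemma coset_eq_of_mem: "y \<in> coset Z w \<Longrightarrow> coset Z y = coset Z w"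
  by (intro coset_eq) (auto simp: coset_def)

lemma coset_eq_self_iff: "coset Z w = Z \<longleftrightarrow> w \<in> Z"
proof
  assume "coset Z w = Z" then show "w \<in> Z" using mem_coset_self[of w] by simp
next
  assume "w \<in> Z" then show "coset Z w = Z" using coset_eq[of w 0] by (simp add: coset_def)
qed

lemma card_cosets:
  assumes "vec.subspace W" "Z \<subseteq> W" "finite W"
  shows "card (coset Z ` W) * card Z = card W"
proof -
  have "\<Union>(coset Z ` W) = W"
    using mem_coset_self vec.subspace_add[OF assms(1)] assms(2) by (auto simp: coset_def)
  moreover have "card Z * card (coset Z ` W) = card (\<Union>(coset Z ` W))"
  proof (rule card_partition)
    show "card C = card Z" if "C \<in> coset Z ` W" for C
      using that by (auto simp: coset_def card_image)
    show "C \<inter> C' = {}" if "C \<in> coset Z ` W" "C' \<in> coset Z ` W" "C \<noteq> C'" for C C'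
      using that coset_eq_of_mem by blast
  qed (use \<open>\<Union>(coset Z ` W) = W\<close> assms(3) in simp_all)
  ultimately show ?thesis by (simp add: mult.commute)
qed

end

lemma wedge_notin_range_wedge:
  fixes a b p :: "'a::field ^ 'm::finite"
  assumes "p \<noteq> 0" "wedge a b \<notin> range (wedge p)"
  shows "p \<notin> vec.span {a, b}" "vec.independent {a, b, p}" "distinct [a, b, p]"
proof -
  have "wedge a b \<noteq> 0" using assms(2) by (metis rangeI wedge_zero_right)
  then have ab: "vec.independent {a, b}" "a \<noteq> b" by (rule wedge_nonzero_imp_independent)+
  show p: "p \<notin> vec.span {a, b}"
  proof
    assume "p \<in> vec.span {a, b}"
    then obtain y where "wedge a b = wedge p y" using wedge_eq_wedge_of_mem_span assms(1) by blast
    with assms(2) show False by auto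
  qed
  have "vec.independent (insert p {a, b})" using ab p by (simp add: vec.independent_insert)
  then show "vec.independent {a, b, p}" by (simp add: insert_commute)
  show "distinct [a, b, p]" using ab p vec.span_base[of _ "{a, b}"] by auto
qed

lemma decomposables_coset_subset:
  fixes a b p :: "'a::field ^ 'm::finite"
  assumes "p \<noteq> 0" "wedge a b \<notin> range (wedge p)"
  shows "{v \<in> coset (slice W p) (wedge a b). decomposable v}
           \<subseteq> (\<lambda>x. wedge a b + wedge p x) ` {x \<in> vec.span {a, b}. wedge p x \<in> W}"
proof
  fix v assume "v \<in> {v \<in> coset (slice W p) (wedge a b). decomposable v}"
  then obtain x u u' where x: "wedge p x \<in> W" "v = wedge a b + wedge p x" and v: "v = wedge u u'"
    by (auto simp: coset_def slice_def decomposable_def)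
  have "x \<in> vec.span (insert p {a, b})"
  proof (rule ccontr)
    assume x_notin: "x \<notin> vec.span (insert p {a, b})"
    have "insert p {a, b} = {a, b, p}" by auto
    with x_notin have "vec.independent (insert x {a, b, p})"
      using wedge_notin_range_wedge(2)[OF assms] by (simp add: vec.independent_insert)
    moreover have "insert x {a, b, p} = {a, b, p, x}" by auto
    moreover have "distinct [a, b, p, x]"
      using wedge_notin_range_wedge(3)[OF assms] x_notin vec.span_base[of _ "insert p {a, b}"] by auto
    ultimately have "wedge a b + wedge p x \<noteq> wedge u u'"
      by (intro wedge_add_wedge_neq_wedge) simp_all
    with x v show False by simp
  qed
  then obtain k where k: "x - k *s p \<in> vec.span {a, b}" by (auto simp: vec.span_insert)
  have "wedge p (x - k *s p) = wedge p x"
    using wedge_add_right[of p x "- (k *s p)"] wedge_scale_right[of p "- k" p] by simp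
  with x k show "v \<in> (\<lambda>x. wedge a b + wedge p x) ` {x \<in> vec.span {a, b}. wedge p x \<in> W}"
    by (auto intro!: image_eqI[of _ _ "x - k *s p"])
qed

lemma card_decomposables_coset_le:
  fixes a b p :: "'a::{finite, field} ^ 'm::finite"
  assumes "p \<noteq> 0" "wedge a b \<notin> range (wedge p)"
  shows "card {v \<in> coset (slice W p) (wedge a b). decomposable v}
           \<le> card {x \<in> vec.span {a, b}. wedge p x \<in> W}"
proof -
  have "card {v \<in> coset (slice W p) (wedge a b). decomposable v}
          \<le> card ((\<lambda>x. wedge a b + wedge p x) ` {x \<in> vec.span {a, b}. wedge p x \<in> W})"
    by (rule card_mono[OF _ decomposables_coset_subset[OF assms]]) simp
  also have "\<dots> \<le> card {x \<in> vec.span {a, b}. wedge p x \<in> W}" by (rule card_image_le) simp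
  finally show ?thesis .
qed

lemma dim_slice_ge_2:
  fixes a b p x :: "'a::field ^ 'm::finite"
  assumes W: "vec.subspace W" "wedge a b \<in> W" "wedge p x \<in> W"
    and p: "p \<noteq> 0" "wedge a b \<notin> range (wedge p)"
    and x: "x \<in> vec.span {a, b}" "x \<noteq> 0"
  shows "2 \<le> vec.dim (slice W x)"
proof -
  obtain y where y: "wedge a b = wedge x y" using wedge_eq_wedge_of_mem_span[OF x] by blast
  have "wedge x p \<in> W" using vec.subspace_neg[OF W(1,3)] by (simp add: wedge_commute[of x p])
  then have in_slice: "{wedge a b, wedge x p} \<subseteq> slice W x" using W(2) y by (simp add: slice_def)
  have nonzero: "wedge x p \<noteq> 0"
  proof
    assume "wedge x p = 0"
    then obtain k where "p = k *s x" using wedge_eq_0_iff[OF x(2)] by (auto simp: vec.span_singleton)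
    then show False using wedge_notin_range_wedge(1)[OF p] x(1) by (simp add: vec.span_scale)
  qed
  have notin: "wedge a b \<notin> vec.span {wedge x p}"
  proof
    assume "wedge a b \<in> vec.span {wedge x p}"
    then obtain k where "wedge a b = k *s wedge x p" by (auto simp: vec.span_singleton)
    then have "wedge a b = wedge p ((- k) *s x)"
      by (simp add: wedge_def vec_eq_iff algebra_simps)
    with p(2) show False by auto
  qed
  then have distinct: "wedge a b \<noteq> wedge x p" using vec.span_base[of "wedge x p" "{wedge x p}"] by auto
  have "vec.independent {wedge a b, wedge x p}"
    using nonzero notin by (simp add: vec.independent_insert)
  then have "card {wedge a b, wedge x p} \<le> vec.dim (slice W x)"
    using in_slice by (intro vec.independent_card_le_dim)
  with distinct show ?thesis by simp
qed

lemma inj_on_wedge_span: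
  fixes p :: "'a::field ^ 'm::finite"
  assumes "p \<notin> vec.span S"
  shows "inj_on (wedge p) (vec.span S)"
proof -
  have "x = 0" if x: "x \<in> vec.span S" "wedge p x = 0" for x
  proof (rule ccontr)
    assume "x \<noteq> 0"
    have "p \<noteq> 0" using assms vec.span_zero by auto
    then obtain k where "x = k *s p" using x(2) wedge_eq_0_iff by (auto simp: vec.span_singleton)
    with \<open>x \<noteq> 0\<close> have "p = inverse k *s x" by (auto simp: vector_smult_assoc)
    with assms x(1) show False by (simp add: vec.span_scale)
  qed
  then show ?thesis using vec.linear_inj_on_iff_eq_0[OF linear_wedge] by blast
qed

lemma slice_eq_wedge_image_span:
  fixes a b p :: "'a::{finite, field} ^ 'm::finite"
  assumes W: "vec.subspace W" "wedge p a \<in> W" "wedge p b \<in> W"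
    and p: "p \<noteq> 0" "wedge a b \<notin> range (wedge p)"
    and dim: "vec.dim (slice W p) \<le> 2"
  shows "slice W p = wedge p ` vec.span {a, b}"
proof -
  have sub: "wedge p ` vec.span {a, b} \<subseteq> slice W p"
    using W vec.span_minimal[of "{a, b}" "{x. wedge p x \<in> W}"]
      vec.linear_subspace_linear_preimage[OF linear_wedge W(1)]
    by (auto simp: slice_def)
  have "vec.independent {a, b}" "a \<noteq> b"
    using vec.independent_mono[OF wedge_notin_range_wedge(2)[OF p], of "{a, b}"]
      wedge_notin_range_wedge(3)[OF p] by auto
  then have "card (vec.span {a, b}) = CARD('a) ^ 2" by (simp add: card_span_independent power2_eq_square)
  moreover have "card (slice W p) \<le> CARD('a) ^ 2"
    using dim card_subspace[OF subspace_slice[OF W(1)]] by (simp add: power_increasing)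
  moreover have "card (wedge p ` vec.span {a, b}) = card (vec.span {a, b})"
    using inj_on_wedge_span[OF wedge_notin_range_wedge(1)[OF p]] by (rule card_image)
  ultimately show ?thesis using sub card_mono[OF _ sub] by (intro card_subset_eq[symmetric]) auto
qed

lemma wedge_mem_span_of_mem_span3:
  fixes a b p a' b' :: "'a::field ^ 'm::finite"
  assumes "a' \<in> vec.span {p, a, b}" "b' \<in> vec.span {p, a, b}"
  shows "wedge a' b' \<in> vec.span {wedge a b, wedge p a, wedge p b}"
proof -
  let ?S = "vec.span {wedge a b, wedge p a, wedge p b}"
  have "{wedge s t | s t. s \<in> {p, a, b} \<and> t \<in> {p, a, b}} \<subseteq> ?S"
    using vec.span_base[of _ "{wedge a b, wedge p a, wedge p b}"] vec.span_zero
      vec.span_neg[of _ "{wedge a b, wedge p a, wedge p b}"]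
    by (auto simp: wedge_commute[of a p] wedge_commute[of b p] wedge_commute[of b a])
  then have "vec.span {wedge s t | s t. s \<in> {p, a, b} \<and> t \<in> {p, a, b}} \<subseteq> ?S"
    by (simp add: vec.span_minimal)
  with wedge_mem_span_wedges[OF assms] show ?thesis by blast
qed

lemma wedge_mem_image_span_imp_mem_span:
  fixes p a :: "'a::field ^ 'm::finite"
  assumes "p \<noteq> 0" "wedge p a \<in> wedge p ` vec.span S"
  shows "a \<in> vec.span (insert p S)"
proof -
  obtain s where s: "s \<in> vec.span S" "wedge p a = wedge p s" using assms(2) by blast
  then have "wedge p (a - s) = 0" using wedge_add_right[of p s "a - s"] by simp
  then obtain k where "a - s = k *s p" using wedge_eq_0_iff[OF assms(1)] by (auto simp: vec.span_singleton)
  then have "a - k *s p \<in> vec.span S" using s(1) by (simp flip: \<open>a - s = k *s p\<close>)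
  then show ?thesis by (auto simp: vec.span_insert)
qed

lemma exists_slice_of_max_dim:
  fixes W :: "('a::field ^ ('m::finite \<times> 'm)) set"
  obtains p :: "'a ^ 'm" where "p \<noteq> 0" "\<And>x. x \<noteq> 0 \<Longrightarrow> vec.dim (slice W x) \<le> vec.dim (slice W p)"
proof -
  fix i :: 'm
  define P where "P k \<longleftrightarrow> (\<exists>x :: 'a ^ 'm. x \<noteq> 0 \<and> vec.dim (slice W x) = k)" for k
  have P_dim: "P (vec.dim (slice W x))" if "x \<noteq> 0" for x
    using that unfolding P_def by blast
  have "k \<le> CARD('m)" if "P k" for k
  proof -
    from that obtain x where "x \<noteq> 0" "vec.dim (slice W x) = k" unfolding P_def by blast
    then show ?thesis using dim_slice_less[of x W] by simp
  qed
  then obtain k where k: "P k" and max: "\<And>k'. P k' \<Longrightarrow> k' \<le> k"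
    using Nat.ex_has_greatest_nat[of P "vec.dim (slice W (axis i 1))" "CARD('m)"] P_dim[of "axis i 1"]
    by (auto simp: axis_eq_0_iff)
  from k obtain p where "p \<noteq> 0" "vec.dim (slice W p) = k" unfolding P_def by blast
  with max P_dim show ?thesis using that by metis
qed

lemma dim_slice_pos:
  assumes "vec.subspace W" "wedge u v \<in> W" "wedge u v \<noteq> 0"
  shows "1 \<le> vec.dim (slice W u)"
proof -
  have "\<not> slice W u \<subseteq> {0}" using assms(2,3) by (auto simp: slice_def)
  then show ?thesis using vec.dim_eq_0[of "slice W u"] by linarith
qed

lemma power_sum_le_of_le:
  fixes q d n :: nat
  assumes "2 \<le> q" "3 \<le> d" "d \<le> n"
  shows "q ^ d - 1 + (q ^ (n + 1 - d) - 1) * q ^ 2 \<le> q ^ n - 1 + q ^ 2 * (q - 1)"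
proof -
  obtain s where s: "d = 3 + s" using assms(2) by (intro that[of "d - 3"]) simp
  obtain t where t: "n = d + t" using assms(3) by (intro that[of "n - d"]) simp
  obtain s' t' where "q ^ s = Suc s'" "q ^ t = Suc t'"
    using assms(1) by (cases "q ^ s"; cases "q ^ t") simp_all
  then have ab: "q ^ s + q ^ t \<le> q ^ s * q ^ t + 1" by (simp add: algebra_simps)
  have "q^3 * q^s + q^3 * q^t \<le> q^3 * (q^s * q^t) + q^3"
    using mult_le_mono2[OF ab, of "q^3"] by (simp add: algebra_simps)
  moreover have "1 \<le> q ^ 3 * q ^ s" "1 \<le> q * q ^ t" "1 \<le> q ^ 3 * (q ^ s * q ^ t)" "1 \<le> q"
    using assms(1) by (simp_all add: one_le_mult_iff)
  ultimately have "q^3 * q^s - 1 + (q * q^t - 1) * q^2 \<le> q^3 * (q^s * q^t) - 1 + q^2 * (q - 1)"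
    by (simp add: algebra_simps diff_mult_distrib power_numeral_reduce)
  moreover have "q ^ d = q^3 * q^s" "q ^ (n + 1 - d) = q * q ^ t" "q ^ n = q^3 * (q^s * q^t)"
    by (simp_all add: s t power_add)
  ultimately show ?thesis by simp
qed

lemma rich_cosets_count_le:
  fixes q n k N :: nat
  assumes "2 \<le> q" "2 \<le> n" "k \<le> q - 1" "k \<le> N" "N = q ^ (n - 1) - 1"
  shows "q ^ 2 - 1 + (q ^ 2 * k + q * (N - k)) \<le> q ^ n - 1 + q ^ 2 * (q - 1)"
proof -
  obtain r where r: "q = r + 2" using assms(1) by (intro that[of "q - 2"]) simp
  obtain j where j: "r + 1 = k + j" using assms(3) r by (intro that[of "r + 1 - k"]) simp
  have "q ^ 2 * k + q ^ 2 \<le> q * k + q + q ^ 2 * (q - 1)"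
    unfolding r using j by (simp add: algebra_simps power2_eq_square)
  moreover have "q * (N - k) + q * k = q * N" using assms(4) by (simp add: add_mult_distrib2[symmetric])
  moreover have "q ^ n = q * N + q"
  proof -
    have "q ^ n = q * q ^ (n - 1)" using assms(2) by (cases n) simp_all
    moreover have "q ^ (n - 1) = N + 1" using assms(1,5) by simp
    ultimately show ?thesis by simp
  qed
  moreover have "1 \<le> q ^ 2" using assms(1) by simp
  ultimately show ?thesis by linarith
qed

locale slice_count =
  fixes W :: "('a::{finite, field} ^ ('m::finite \<times> 'm)) set" and p :: "'a ^ 'm"
  assumes subspace_W: "vec.subspace W" and p_nonzero: "p \<noteq> 0"
begin

abbreviation Z :: "('a ^ ('m \<times> 'm)) set" where "Z \<equiv> slice W p"

abbreviation D :: "('a ^ ('m \<times> 'm)) set" where "D \<equiv> {w \<in> W. decomposable w}"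

abbreviation other_cosets :: "('a ^ ('m \<times> 'm)) set set" where "other_cosets \<equiv> coset Z ` W - {Z}"

lemma subspace_Z: "vec.subspace Z"
  using subspace_slice[OF subspace_W] .

lemma card_decomposables_le_sum: "card D \<le> card Z - 1 + (\<Sum>C\<in>other_cosets. card (D \<inter> C))"
proof -
  have "D \<subseteq> (Z - {0}) \<union> (\<Union>C\<in>other_cosets. D \<inter> C)"
  proof
    fix w assume w: "w \<in> D"
    show "w \<in> (Z - {0}) \<union> (\<Union>C\<in>other_cosets. D \<inter> C)"
    proof (cases "w \<in> Z")
      case True
      with w show ?thesis by (auto simp: decomposable_def)
    next
      case False
      with w have "coset Z w \<in> other_cosets" using coset_eq_self_iff[OF subspace_Z] by auto
      with w show ?thesis using mem_coset_self[OF subspace_Z] by blast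
    qed
  qed
  then have "card D \<le> card ((Z - {0}) \<union> (\<Union>C\<in>other_cosets. D \<inter> C))" by (rule card_mono[rotated]) simp
  also have "\<dots> \<le> card (Z - {0}) + card (\<Union>C\<in>other_cosets. D \<inter> C)" by (rule card_Un_le)
  also have "card (Z - {0}) = card Z - 1" using vec.subspace_0[OF subspace_Z] by simp
  also have "card (\<Union>C\<in>other_cosets. D \<inter> C) \<le> (\<Sum>C\<in>other_cosets. card (D \<inter> C))" by (rule card_UN_le) simp
  finally show ?thesis by simp
qed

lemma card_other_cosets:
  assumes "card W = CARD('a) ^ k"
  shows "card other_cosets = CARD('a) ^ (k - vec.dim Z) - 1"
proof -
  have q: "1 < CARD('a)" using card_mono[of UNIV "{0::'a, 1}"] by simp
  have cZ: "card Z = CARD('a) ^ vec.dim Z" by (rule card_subspace[OF subspace_Z])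
  have "Z \<subseteq> W" by (simp add: slice_def)
  then have "card (coset Z ` W) * CARD('a) ^ vec.dim Z = CARD('a) ^ k"
    using card_cosets[OF subspace_Z subspace_W] assms cZ by simp
  moreover have "CARD('a) ^ vec.dim Z \<le> CARD('a) ^ k"
    using card_mono[OF _ \<open>Z \<subseteq> W\<close>] assms cZ by simp
  then have "vec.dim Z \<le> k" using q by (rule power_le_imp_le_exp[rotated])
  moreover from this have "CARD('a) ^ k = CARD('a) ^ (k - vec.dim Z) * CARD('a) ^ vec.dim Z"
    by (simp flip: power_add)
  ultimately have "card (coset Z ` W) = CARD('a) ^ (k - vec.dim Z)" using q by simp
  moreover have "Z \<in> coset Z ` W"
  proof (rule image_eqI)
    show "Z = coset Z 0" by (metis coset_eq_self_iff[OF subspace_Z] vec.subspace_0[OF subspace_Z])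
  qed (rule vec.subspace_0[OF subspace_W])
  ultimately show ?thesis by simp
qed

lemma coset_witness:
  assumes "C \<in> other_cosets" "D \<inter> C \<noteq> {}"
  obtains a b where "wedge a b \<in> W" "wedge a b \<notin> range (wedge p)" "C = coset Z (wedge a b)"
proof -
  obtain w where C: "C = coset Z w" using assms(1) by blast
  from assms(2) obtain a b where ab: "wedge a b \<in> W" "wedge a b \<in> C"
    by (auto simp: decomposable_def)
  with C have "C = coset Z (wedge a b)" using coset_eq_of_mem[OF subspace_Z] by simp
  moreover from this have "wedge a b \<notin> Z" using assms(1) coset_eq_self_iff[OF subspace_Z] by auto
  ultimately show ?thesis using that ab(1) by (auto simp: slice_def)
qed

lemma card_decomposables_coset_le_witness:
  assumes "C = coset Z (wedge a b)" "wedge a b \<notin> range (wedge p)"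
  shows "card (D \<inter> C) \<le> card {x \<in> vec.span {a, b}. wedge p x \<in> W}"
proof -
  have "card (D \<inter> C) \<le> card {v \<in> C. decomposable v}" by (rule card_mono) auto
  also have "\<dots> \<le> card {x \<in> vec.span {a, b}. wedge p x \<in> W}"
    using card_decomposables_coset_le[OF p_nonzero assms(2)] assms(1) by simp
  finally show ?thesis .
qed

lemma card_decomposables_coset_le_square:
  assumes "C \<in> other_cosets"
  shows "card (D \<inter> C) \<le> CARD('a) ^ 2"
proof (cases "D \<inter> C = {}")
  case False
  then obtain a b where "C = coset Z (wedge a b)" "wedge a b \<notin> range (wedge p)"
    using coset_witness[OF assms] by metis
  then have "card (D \<inter> C) \<le> card {x \<in> vec.span {a, b}. wedge p x \<in> W}"
    by (rule card_decomposables_coset_le_witness)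
  also have "\<dots> \<le> card (vec.span {a, b})" by (rule card_mono) auto
  also have "\<dots> \<le> CARD('a) ^ 2" by (rule card_span_pair_le)
  finally show ?thesis .
qed simp

lemma card_decomposables_coset_le_one:
  assumes "C \<in> other_cosets" and lines: "\<And>x. x \<noteq> 0 \<Longrightarrow> vec.dim (slice W x) \<le> 1"
  shows "card (D \<inter> C) \<le> 1"
proof (cases "D \<inter> C = {}")
  case False
  then obtain a b where ab: "wedge a b \<in> W" "wedge a b \<notin> range (wedge p)" "C = coset Z (wedge a b)"
    using coset_witness[OF assms(1)] by metis
  have "x = 0" if x: "x \<in> vec.span {a, b}" "wedge p x \<in> W" for x
  proof (rule ccontr)
    assume "x \<noteq> 0"
    with dim_slice_ge_2[OF subspace_W ab(1) x(2) p_nonzero ab(2) x(1)] lines[of x] show False by simp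
  qed
  then have "{x \<in> vec.span {a, b}. wedge p x \<in> W} \<subseteq> {0}" by blast
  then have "card {x \<in> vec.span {a, b}. wedge p x \<in> W} \<le> card {0 :: 'a ^ 'm}" by (rule card_mono[rotated]) simp
  then have "card {x \<in> vec.span {a, b}. wedge p x \<in> W} \<le> 1" by simp
  then show ?thesis using card_decomposables_coset_le_witness[OF ab(3,2)] by linarith
qed simp

lemma rich_coset_witness:
  assumes "C \<in> other_cosets" "CARD('a) < card (D \<inter> C)"
  obtains a b where "C = coset Z (wedge a b)" "wedge a b \<notin> range (wedge p)" "wedge p a \<in> W" "wedge p b \<in> W"
proof -
  have "D \<inter> C \<noteq> {}" using assms(2) by auto
  then obtain a b where ab: "wedge a b \<notin> range (wedge p)" "C = coset Z (wedge a b)"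
    using coset_witness[OF assms(1)] by metis
  let ?E = "{x \<in> vec.span {a, b}. wedge p x \<in> W}"
  have "?E = vec.span {a, b} \<inter> {x. wedge p x \<in> W}" by auto
  then have subspace_E: "vec.subspace ?E"
    using vec.linear_subspace_linear_preimage[OF linear_wedge subspace_W]
    by (simp add: vec.subspace_inter vec.subspace_span)
  have q: "1 < CARD('a)" using card_mono[of UNIV "{0::'a, 1}"] by simp
  have "CARD('a) ^ 1 < CARD('a) ^ vec.dim ?E"
    using assms(2) card_decomposables_coset_le_witness[OF ab(2,1)] card_subspace[OF subspace_E] by simp
  then have "1 < vec.dim ?E" by (rule power_less_imp_less_exp[OF q])
  moreover have "card {a, b} \<le> 2" by (simp add: card_insert_if)
  then have "vec.dim (vec.span {a, b}) \<le> 2"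
    using vec.dim_le_card[of "vec.span {a, b}" "{a, b}"] by simp
  ultimately have "vec.span ?E = vec.span (vec.span {a, b})" by (intro vec.dim_eq_span) simp_all
  then have "a \<in> ?E" "b \<in> ?E"
    using subspace_E vec.span_base[of _ "{a, b}"] by (simp_all add: vec.span_eq_iff[THEN iffD2])
  with ab that show ?thesis by blast
qed

lemma rich_coset_eq_scaled:
  assumes Z: "Z = wedge p ` vec.span {a0, b0}"
    and C: "C = coset Z (wedge a b)" "wedge a b \<notin> range (wedge p)" "wedge p a \<in> W" "wedge p b \<in> W"
  shows "\<exists>k. k \<noteq> 0 \<and> C = coset Z (k *s wedge a0 b0)"
proof -
  have "wedge p a \<in> Z" "wedge p b \<in> Z" using C(3,4) by (simp_all add: slice_def)
  then have "a \<in> vec.span {p, a0, b0}" "b \<in> vec.span {p, a0, b0}"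
    using wedge_mem_image_span_imp_mem_span[OF p_nonzero] by (simp_all add: Z)
  then have "wedge a b \<in> vec.span (insert (wedge a0 b0) {wedge p a0, wedge p b0})"
    by (rule wedge_mem_span_of_mem_span3)
  then obtain k where k: "wedge a b - k *s wedge a0 b0 \<in> vec.span {wedge p a0, wedge p b0}"
    by (auto simp: vec.span_insert)
  moreover have "vec.span {wedge p a0, wedge p b0} \<subseteq> Z"
    using subspace_Z vec.span_base[of _ "{a0, b0}"] by (intro vec.span_minimal) (auto simp: Z)
  ultimately have diff: "wedge a b - k *s wedge a0 b0 \<in> Z" by blast
  then have "C = coset Z (k *s wedge a0 b0)" using C(1) coset_eq[OF subspace_Z] by simp
  moreover have "k \<noteq> 0" using diff C(2) by (auto simp: slice_def)
  ultimately show ?thesis by blast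
qed

text \<open>If Z = p \<and> \<langle>a0, b0\<rangle>, the factors of a decomposable vector in a rich coset lie in
  \<langle>p, a0, b0\<rangle>, so the coset is that of a multiple of a0 \<and> b0.\<close>

lemma card_rich_cosets_le:
  assumes "vec.dim Z = 2"
  shows "card {C \<in> other_cosets. CARD('a) < card (D \<inter> C)} \<le> CARD('a) - 1"
proof (cases "{C \<in> other_cosets. CARD('a) < card (D \<inter> C)} = {}")
  case False
  then obtain C0 where "C0 \<in> other_cosets" "CARD('a) < card (D \<inter> C0)" by blast
  then obtain a0 b0 where "wedge a0 b0 \<notin> range (wedge p)" "wedge p a0 \<in> W" "wedge p b0 \<in> W"
    by (rule rich_coset_witness)
  then have Z: "Z = wedge p ` vec.span {a0, b0}"
    using slice_eq_wedge_image_span[OF subspace_W _ _ p_nonzero] assms by simp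
  have "{C \<in> other_cosets. CARD('a) < card (D \<inter> C)} \<subseteq> (\<lambda>k. coset Z (k *s wedge a0 b0)) ` (UNIV - {0})"
  proof
    fix C assume "C \<in> {C \<in> other_cosets. CARD('a) < card (D \<inter> C)}"
    then have C: "C \<in> other_cosets" "CARD('a) < card (D \<inter> C)" by simp_all
    obtain a b where "C = coset Z (wedge a b)" "wedge a b \<notin> range (wedge p)" "wedge p a \<in> W" "wedge p b \<in> W"
      by (rule rich_coset_witness[OF C])
    from rich_coset_eq_scaled[OF Z this] obtain k where "k \<noteq> 0" "C = coset Z (k *s wedge a0 b0)" by blast
    then show "C \<in> (\<lambda>k. coset Z (k *s wedge a0 b0)) ` (UNIV - {0})" by (intro image_eqI[of _ _ k]) simp_all
  qed
  then have "card {C \<in> other_cosets. CARD('a) < card (D \<inter> C)} \<le> card ((\<lambda>k. coset Z (k *s wedge a0 b0)) ` (UNIV - {0}))"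
    by (rule card_mono[rotated]) simp
  also have "\<dots> \<le> card (UNIV - {0 :: 'a})" by (rule card_image_le) simp
  finally show ?thesis by simp
qed (simp only: card.empty zero_le)

lemma card_Z: "card Z = CARD('a) ^ vec.dim Z"
  by (rule card_subspace[OF subspace_Z])

lemma decomposables_empty_if_dim_0:
  assumes "vec.dim Z = 0" and max: "\<And>x. x \<noteq> 0 \<Longrightarrow> vec.dim (slice W x) \<le> vec.dim Z"
  shows "D = {}"
proof (rule ccontr)
  assume "D \<noteq> {}"
  then obtain u v where uv: "wedge u v \<in> W" "wedge u v \<noteq> 0" by (auto simp: decomposable_def)
  then have "u \<noteq> 0" by auto
  with dim_slice_pos[OF subspace_W uv] max[of u] assms(1) show False by linarith
qed

lemma card_decomposables_le_if_dim_ge_3: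
  assumes "card W = CARD('a) ^ (n + 1)" "3 \<le> vec.dim Z" "vec.dim Z \<le> n"
  shows "card D \<le> CARD('a) ^ n - 1 + CARD('a) ^ 2 * (CARD('a) - 1)"
proof -
  have "(\<Sum>C\<in>other_cosets. card (D \<inter> C)) \<le> (\<Sum>C\<in>other_cosets. CARD('a) ^ 2)"
    by (intro sum_mono card_decomposables_coset_le_square)
  also have "\<dots> = (CARD('a) ^ (n + 1 - vec.dim Z) - 1) * CARD('a) ^ 2"
    using card_other_cosets[OF assms(1)] by simp
  finally have "card D \<le> CARD('a) ^ vec.dim Z - 1 + (CARD('a) ^ (n + 1 - vec.dim Z) - 1) * CARD('a) ^ 2"
    using card_decomposables_le_sum card_Z by linarith
  also have "\<dots> \<le> CARD('a) ^ n - 1 + CARD('a) ^ 2 * (CARD('a) - 1)"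
    using card_mono[of UNIV "{0::'a, 1}"] assms(2,3) by (intro power_sum_le_of_le) simp_all
  finally show ?thesis .
qed

lemma card_decomposables_le_if_dim_1:
  assumes "card W = CARD('a) ^ (n + 1)" "vec.dim Z = 1"
    and lines: "\<And>x. x \<noteq> 0 \<Longrightarrow> vec.dim (slice W x) \<le> 1"
  shows "card D \<le> CARD('a) ^ n - 1 + CARD('a) ^ 2 * (CARD('a) - 1)"
proof -
  have "(\<Sum>C\<in>other_cosets. card (D \<inter> C)) \<le> (\<Sum>C\<in>other_cosets. 1)"
    by (intro sum_mono card_decomposables_coset_le_one lines)
  also have "\<dots> = CARD('a) ^ n - 1" using card_other_cosets[OF assms(1)] assms(2) by simp
  moreover have "card Z = CARD('a)" using card_Z assms(2) by simp
  moreover have "CARD('a) - 1 \<le> CARD('a) ^ 2 * (CARD('a) - 1)" by simp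
  ultimately show ?thesis using card_decomposables_le_sum by linarith
qed

lemma card_decomposables_le_if_dim_2:
  assumes "card W = CARD('a) ^ (n + 1)" "vec.dim Z = 2" "2 \<le> n"
  shows "card D \<le> CARD('a) ^ n - 1 + CARD('a) ^ 2 * (CARD('a) - 1)"
proof -
  define R where "R = {C \<in> other_cosets. CARD('a) < card (D \<inter> C)}"
  have R: "R \<subseteq> other_cosets" "finite other_cosets" by (auto simp: R_def)
  have "(\<Sum>C\<in>other_cosets. card (D \<inter> C)) = (\<Sum>C\<in>R. card (D \<inter> C)) + (\<Sum>C\<in>other_cosets - R. card (D \<inter> C))"
    using sum.subset_diff[OF R] by (simp add: add.commute)
  also have "\<dots> \<le> (\<Sum>C\<in>R. CARD('a) ^ 2) + (\<Sum>C\<in>other_cosets - R. CARD('a))"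
    using R(1) by (intro add_mono sum_mono card_decomposables_coset_le_square) (auto simp: R_def)
  also have "\<dots> = CARD('a) ^ 2 * card R + CARD('a) * (card other_cosets - card R)"
    using R by (simp add: card_Diff_subset finite_subset)
  finally have "card D \<le> CARD('a) ^ 2 - 1 + (CARD('a) ^ 2 * card R + CARD('a) * (card other_cosets - card R))"
    using card_decomposables_le_sum card_Z assms(2) by simp
  also have "\<dots> \<le> CARD('a) ^ n - 1 + CARD('a) ^ 2 * (CARD('a) - 1)"
  proof (rule rich_cosets_count_le)
    show "2 \<le> CARD('a)" using card_mono[of UNIV "{0::'a, 1}"] by simp
    show "card R \<le> CARD('a) - 1" using card_rich_cosets_le[OF assms(2)] by (simp add: R_def)
    show "card R \<le> card other_cosets" using R by (rule card_mono[rotated])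
    show "card other_cosets = CARD('a) ^ (n - 1) - 1" using card_other_cosets[OF assms(1)] assms(2) by simp
  qed (rule assms(3))
  finally show ?thesis .
qed

end

theorem lemma6p6:
  fixes W :: "('a::{finite, field} ^ ('m::finite \<times> 'm)) set"
  assumes "CARD('m) > 4"
    and "vec.subspace W"
    and "W \<subseteq> ext2"
    and "vec.dim W = (CARD('m) - 1) + 1"
  shows "card {w \<in> W. decomposable w}
           \<le> (CARD('a) ^ (CARD('m) - 1) - 1) + CARD('a)^2 * (CARD('a) - 1)"
proof -
  \<comment> \<open>The argument never uses W \<subseteq> ext2, and needs CARD('m) > 4 only as \<mu> \<ge> 2.\<close>
  define n where "n = CARD('m) - 1"
  obtain p where p: "p \<noteq> 0" and max: "\<And>x. x \<noteq> 0 \<Longrightarrow> vec.dim (slice W x) \<le> vec.dim (slice W p)"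
    using exists_slice_of_max_dim by blast
  interpret slice_count W p by unfold_locales (use assms(2) p in simp_all)
  have card_W: "card W = CARD('a) ^ (n + 1)" using card_subspace[OF assms(2)] assms(4) by (simp add: n_def)
  have "vec.dim Z \<le> n" using dim_slice_less[OF p, of W] unfolding n_def by linarith
  consider "vec.dim Z = 0" | "vec.dim Z = 1" | "vec.dim Z = 2" | "3 \<le> vec.dim Z" by linarith
  then have "card D \<le> CARD('a) ^ n - 1 + CARD('a) ^ 2 * (CARD('a) - 1)"
  proof cases
    case 1
    then have "D = {}" using max by (rule decomposables_empty_if_dim_0)
    then show ?thesis by (simp only: card.empty zero_le)
  next
    case 2
    then show ?thesis using card_decomposables_le_if_dim_1[OF card_W] max by simp
  next
    case 3
    then show ?thesis using card_decomposables_le_if_dim_2[OF card_W] assms(1) by (simp add: n_def)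
  next
    case 4
    then show ?thesis using card_decomposables_le_if_dim_ge_3[OF card_W] \<open>vec.dim Z \<le> n\<close> by simp
  qed
  then show ?thesis by (simp add: n_def)
qed

end
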